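(* There is a constant $c>0$ such that for every sufficiently large $n$ there exists an input $x\in\mathrm{Hex}_n^{-1}( * )$ with $\mathrm{C}_{\bar 0}(\mathrm{Hex}_n,x)\ge c\,n^{1.5}$ and $\mathrm{C}_{\bar 1}(\mathrm{Hex}_n,x)\ge c\,n^{1.5}$.
   Context: Inputs to $\mathrm{Hex}_n\colon\{0,1\}^{n\times n}\to\{0,1,*\}$ are $n\times n$ boolean matrices. Two entries of $[n]\times[n]$ are connected if they are horizontally or vertically adjacent (not diagonally). A $1$-path in $x$ is a sequence of $1$-entries, consecutive ones connected, starting in the topmost row and ending in the bottommost row; a $0$-path is a sequence of $0$-entries, consecutive ones connected, starting in the leftmost column and ending in the rightmost column; the length of a path is its number of entries. $\mathrm{Hex}_n(x)=1$ if $x$ contains a $1$-path of length at most $2n$; $\mathrm{Hex}_n(x)=0$ if $x$ contains a $0$-path of length at most $2n$; $\mathrm{Hex}_n(x)=*$ otherwise. For a partial function $f$: a partial input $\rho$ is consistent with $x$ if it agrees with $x$ on its non-$*$ entries; its size is the number of non-$*$ entries; for $\Sigma\subseteq\{0,1,*\}$, $\rho$ is a $\Sigma$-certificate for $x$ if it is consistent with $x$ and $f(x')\in\Sigma$ for every $x'$ consistent with $\rho$; $\mathrm{C}_\Sigma(f,x)$ is the least size of a $\Sigma$-certificate for $x$; $\bar0=\{1,*\}$ and $\bar1=\{0,*\}$. *)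

theory Defs
  imports Complex_Main
begin

text \<open>Inputs: boolean matrices, given as functions on index pairs (row, column);
  only the entries in the grid {0..<n} x {0..<n} are relevant.
  Row 0 is the topmost row, row n-1 the bottommost; column 0 the leftmost.\<close>

type_synonym matrix = "nat \<times> nat \<Rightarrow> bool"
type_synonym partial_input = "nat \<times> nat \<Rightarrow> bool option"

datatype hexval = HZero | HOne | HStar

definition grid :: "nat \<Rightarrow> (nat \<times> nat) set" where
  "grid n = {0..<n} \<times> {0..<n}"

definition adjacent :: "nat \<times> nat \<Rightarrow> nat \<times> nat \<Rightarrow> bool" where
  "adjacent p q \<longleftrightarrow>
     (fst p = fst q \<and> (snd p = snd q + 1 \<or> snd q = snd p + 1)) \<or>
     (snd p = snd q \<and> (fst p = fst q + 1 \<or> fst q = fst p + 1))"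

definition is_walk :: "nat \<Rightarrow> (nat \<times> nat) list \<Rightarrow> bool" where
  "is_walk n ps \<longleftrightarrow> ps \<noteq> [] \<and> set ps \<subseteq> grid n \<and>
     (\<forall>i. Suc i < length ps \<longrightarrow> adjacent (ps ! i) (ps ! Suc i))"

definition one_path :: "nat \<Rightarrow> matrix \<Rightarrow> (nat \<times> nat) list \<Rightarrow> bool" where
  "one_path n x ps \<longleftrightarrow> is_walk n ps \<and> (\<forall>p\<in>set ps. x p) \<and>
     fst (hd ps) = 0 \<and> fst (last ps) = n - 1"

definition zero_path :: "nat \<Rightarrow> matrix \<Rightarrow> (nat \<times> nat) list \<Rightarrow> bool" where
  "zero_path n x ps \<longleftrightarrow> is_walk n ps \<and> (\<forall>p\<in>set ps. \<not> x p) \<and>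
     snd (hd ps) = 0 \<and> snd (last ps) = n - 1"

definition Hex :: "nat \<Rightarrow> matrix \<Rightarrow> hexval" where
  "Hex n x =
     (if \<exists>ps. one_path n x ps \<and> length ps \<le> 2 * n then HOne
      else if \<exists>ps. zero_path n x ps \<and> length ps \<le> 2 * n then HZero
      else HStar)"

definition consistent :: "nat \<Rightarrow> partial_input \<Rightarrow> matrix \<Rightarrow> bool" where
  "consistent n \<rho> x \<longleftrightarrow> (\<forall>p\<in>grid n. \<forall>b. \<rho> p = Some b \<longrightarrow> x p = b)"

definition psize :: "nat \<Rightarrow> partial_input \<Rightarrow> nat" where
  "psize n \<rho> = card {p \<in> grid n. \<rho> p \<noteq> None}"

definition is_certificate :: "nat \<Rightarrow> hexval set \<Rightarrow> matrix \<Rightarrow> partial_input \<Rightarrow> bool" where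
  "is_certificate n \<Sigma> x \<rho> \<longleftrightarrow> consistent n \<rho> x \<and>
     (\<forall>x'. consistent n \<rho> x' \<longrightarrow> Hex n x' \<in> \<Sigma>)"

definition cert_complexity :: "nat \<Rightarrow> hexval set \<Rightarrow> matrix \<Rightarrow> nat" where
  "cert_complexity n \<Sigma> x = (LEAST k. \<exists>\<rho>. is_certificate n \<Sigma> x \<rho> \<and> psize n \<rho> = k)"

abbreviation not0 :: "hexval set" where "not0 \<equiv> {HOne, HStar}"
abbreviation not1 :: "hexval set" where "not1 \<equiv> {HZero, HStar}"

end

theory Submission
  imports Defs
begin

(*
  The hard input consists of all-one rows separated by barrier rows (the odd rows), which are
  zero except at bridges placed every 2D columns, the bridges of consecutive barrier rows being
  shifted by D. A one-path has to cross each of the ~n/2 barriers at a bridge and to walk D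
  columns between consecutive crossings, so for D ~ sqrt n it is much longer than 2n; a zero
  path is trapped in a barrier row, which is cut by bridges. Hence Hex = *.

  A {0,*}-certificate must forbid the one-path that runs down a column c and bypasses every
  barrier cell (i, c) fixed to zero through the nearest bridge, at a cost of at most 4D steps.
  So each of the ~n middle columns contains more than n/(4D) fixed zeros.

  A {1,*}-certificate must forbid, for each barrier row i, the zero-path that runs along row i
  and bypasses every bridge through the all-one row i - 1 and the barrier row i - 2, whose
  zeros extend to distance D around the bridges of row i. This path uses only one cell of row
  i - 1 on each side of each bridge, within distance D, so the certificate has to fix the D - 1
  cells on one side of some bridge to one. Both counts are of order n sqrt n.
*)

lemma is_walk_iff_successively:
  "is_walk n ps \<longleftrightarrow> ps \<noteq> [] \<and> set ps \<subseteq> grid n \<and> successively adjacent ps"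
  unfolding is_walk_def successively_conv_nth by simp

lemma adjacent_sym: "adjacent p q \<Longrightarrow> adjacent q p"
  by (auto simp: adjacent_def)

lemma successively_adjacent_row: "successively adjacent (map (\<lambda>j. (r, j)) [a..<b])"
  by (auto simp: successively_conv_nth adjacent_def)

lemma successively_adjacent_detour:
  assumes "b < c"
  shows "successively adjacent
    (rev (map (\<lambda>j. (r, j)) [b..<c]) @ [(Suc r, b)] @ map (\<lambda>j. (Suc (Suc r), j)) [b..<c])"
proof -
  have "successively adjacent (rev (map (\<lambda>j. (r, j)) [b..<c]))"
    using successively_adjacent_row[of r b c] by (simp add: successively_mono adjacent_sym)
  moreover have "last (rev (map (\<lambda>j. (r, j)) [b..<c])) = (r, b)"
    "hd (map (\<lambda>j. (Suc (Suc r), j)) [b..<c]) = (Suc (Suc r), b)"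
    using assms by (simp_all add: last_rev hd_map)
  moreover have "adjacent (r, b) (Suc r, b)" "adjacent (Suc r, b) (Suc (Suc r), b)"
    by (simp_all add: adjacent_def)
  ultimately show ?thesis
    using assms successively_adjacent_row[of "Suc (Suc r)" b c]
    by (simp add: successively_append_iff successively_Cons)
qed

lemma successively_concat_map_upt:
  assumes "\<And>i. i < m \<Longrightarrow> f i \<noteq> [] \<and> successively R (f i)"
    and "\<And>i. Suc i < m \<Longrightarrow> R (last (f i)) (hd (f (Suc i)))"
  shows "successively R (concat (map f [0..<m]))"
  using assms
proof (induction m)
  case (Suc m)
  show ?case
  proof (cases m)
    case (Suc k)
    have "last (concat (map f [0..<m])) = last (f k)"
      using Suc.prems(1)[of k] Suc by (simp del: upt_Suc add: upt_Suc_append)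
    then show ?thesis
      using Suc.IH Suc.prems Suc by (auto simp: successively_append_iff)
  qed (use Suc.prems in simp)
qed simp

lemma is_walk_concat_segments:
  assumes "0 < m"
    and "\<And>i. i < m \<Longrightarrow> seg i \<noteq> [] \<and> successively adjacent (seg i) \<and> set (seg i) \<subseteq> grid n"
    and "\<And>i. Suc i < m \<Longrightarrow> adjacent (last (seg i)) (hd (seg (Suc i)))"
  shows "is_walk n (concat (map seg [0..<m]))"
    and "hd (concat (map seg [0..<m])) = hd (seg 0)"
    and "last (concat (map seg [0..<m])) = last (seg (m - 1))"
proof -
  have "successively adjacent (concat (map seg [0..<m]))"
    using assms(2,3) by (intro successively_concat_map_upt) auto
  moreover have "concat (map seg [0..<m]) \<noteq> []"
    using assms(1) assms(2)[of 0] by (simp add: upt_conv_Cons)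
  moreover have "set (concat (map seg [0..<m])) \<subseteq> grid n"
    using assms(2) by (simp add: UN_subset_iff)
  ultimately show "is_walk n (concat (map seg [0..<m]))"
    by (simp add: is_walk_iff_successively)
  show "hd (concat (map seg [0..<m])) = hd (seg 0)"
    using assms(1) assms(2)[of 0] by (simp add: upt_conv_Cons)
  show "last (concat (map seg [0..<m])) = last (seg (m - 1))"
    using assms(1) assms(2)[of "m - 1"] by (cases m) simp_all
qed

lemma length_concat_map_upt: "length (concat (map f [0..<m])) = (\<Sum>i<m. length (f i))"
  by (induction m) auto

lemma sum_if_lessThan: "(\<Sum>i<n::nat. if P i then k else 0) = k * card {i. i < n \<and> P i}"
  by (simp add: sum.If_cases Int_def mult.commute)

lemma successively_last_le:
  fixes f :: "'a \<Rightarrow> int"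
  assumes "successively R ps" "ps \<noteq> []"
    and "\<And>p q. p \<in> set ps \<Longrightarrow> q \<in> set ps \<Longrightarrow> R p q \<Longrightarrow> f q \<le> f p + 1"
  shows "f (last ps) \<le> f (hd ps) + int (length ps - 1)"
  using assms
proof (induction ps rule: induct_list012)
  case (3 p q ps)
  have "f (last (q # ps)) \<le> f (hd (q # ps)) + int (length (q # ps) - 1)"
    by (rule "3.IH"(2)) (use "3.prems" in auto)
  moreover have "f q \<le> f p + 1"
    using "3.prems" by auto
  ultimately show ?case
    by simp
qed simp_all

lemma successively_invariant:
  assumes "successively R ps" "ps \<noteq> []" "P (hd ps)"
    and "\<And>p q. p \<in> set ps \<Longrightarrow> q \<in> set ps \<Longrightarrow> R p q \<Longrightarrow> P p \<Longrightarrow> P q"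
  shows "P (last ps)"
  using assms
proof (induction ps rule: induct_list012)
  case (3 p q ps)
  then have "P q"
    by auto
  then have "P (last (q # ps))"
    by (intro "3.IH"(2)) (use "3.prems" in auto)
  then show ?case
    by simp
qed simp_all

lemma one_path_mono:
  "(\<And>p. p \<in> grid n \<Longrightarrow> x p \<Longrightarrow> y p) \<Longrightarrow> one_path n x ps \<Longrightarrow> one_path n y ps"
  unfolding one_path_def is_walk_def by blast

section \<open>The hard input\<close>

definition barrier_row :: "nat \<Rightarrow> nat \<Rightarrow> bool" where
  "barrier_row n i \<longleftrightarrow> odd i \<and> i + 1 < n"

definition bridge_phase :: "nat \<Rightarrow> nat \<Rightarrow> nat" where
  "bridge_phase D i = (if i mod 4 = 1 then 0 else D)"

definition bridge :: "nat \<Rightarrow> nat \<Rightarrow> nat \<Rightarrow> nat \<Rightarrow> bool" where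
  "bridge n D i j \<longleftrightarrow> barrier_row n i \<and> D \<le> j \<and> j + D < n \<and> j mod (2 * D) = bridge_phase D i"

definition hard_input :: "nat \<Rightarrow> nat \<Rightarrow> matrix" where
  "hard_input n D p \<longleftrightarrow> \<not> barrier_row n (fst p) \<or> bridge n D (fst p) (snd p)"

lemma not_barrier_row_Suc: "barrier_row n i \<Longrightarrow> \<not> barrier_row n (Suc i)"
  by (simp add: barrier_row_def)

lemma not_barrier_row_pred: "barrier_row n (Suc i) \<Longrightarrow> \<not> barrier_row n i"
  by (simp add: barrier_row_def)

lemma bridge_phase_cases: "bridge_phase D i = 0 \<or> bridge_phase D i = D"
  by (simp add: bridge_phase_def)

lemma bridge_phase_add_2: "odd i \<Longrightarrow> 0 < D \<Longrightarrow> bridge_phase D (i + 2) \<noteq> bridge_phase D i"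
  unfolding bridge_phase_def by (auto, presburger+)

lemma opposite_residues_far:
  fixes b j D :: nat
  assumes "0 < D" and "{b mod (2 * D), j mod (2 * D)} = {0, D}"
  shows "b + D \<le> j \<or> j + D \<le> b"
proof -
  define q where "q = int (j div (2 * D)) - int (b div (2 * D))"
  have "int j - int b = 2 * int D * q + int (j mod (2 * D)) - int (b mod (2 * D))"
    unfolding q_def zdiv_int zmod_int
    using div_mult_mod_eq[of "int b" "2 * int D"] div_mult_mod_eq[of "int j" "2 * int D"]
    by (simp add: algebra_simps)
  then have "int j - int b = int D * (2 * q + 1) \<or> int j - int b = int D * (2 * (q - 1) + 1)"
    using assms(2) by (auto simp: doubleton_eq_iff algebra_simps)
  then obtain k :: int where k: "int j - int b = int D * (2 * k + 1)"
    by blast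
  have "\<bar>2 * k + 1\<bar> \<ge> 1"
    by presburger
  then have "\<bar>int j - int b\<bar> \<ge> int D"
    unfolding k using assms(1) by (simp add: abs_mult mult_le_cancel_left1)
  then show ?thesis
    by linarith
qed

lemma bridges_of_next_barrier_far:
  assumes "0 < D" "bridge n D i b" "bridge n D (i + 2) j"
  shows "b + D \<le> j \<or> j + D \<le> b"
proof (rule opposite_residues_far[OF assms(1)])
  have "bridge_phase D (i + 2) \<noteq> bridge_phase D i"
    using assms bridge_phase_add_2 by (simp add: bridge_def barrier_row_def)
  then show "{b mod (2 * D), j mod (2 * D)} = {0, D}"
    using assms(2,3) bridge_phase_cases[of D i] bridge_phase_cases[of D "i + 2"]
    by (auto simp: bridge_def)
qed

definition wave :: "nat \<Rightarrow> nat \<Rightarrow> int" where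
  "wave D j = \<bar>int (j mod (2 * D)) - int D\<bar>"

text \<open>The distance from column \<open>j\<close> to the nearest column \<open>\<equiv> bridge_phase D i (mod 2D)\<close>.\<close>

definition bridge_dist :: "nat \<Rightarrow> nat \<Rightarrow> nat \<Rightarrow> int" where
  "bridge_dist D i j = (if bridge_phase D i = 0 then int D - wave D j else wave D j)"

lemma wave_bounds: "0 < D \<Longrightarrow> 0 \<le> wave D j \<and> wave D j \<le> int D"
  using mod_less_divisor[of "2 * D" j] unfolding wave_def by linarith

lemma bridge_dist_bounds: "0 < D \<Longrightarrow> 0 \<le> bridge_dist D i j \<and> bridge_dist D i j \<le> int D"
  using wave_bounds[of D j] unfolding bridge_dist_def by auto

lemma bridge_dist_Suc: "0 < D \<Longrightarrow> \<bar>bridge_dist D i (Suc j) - bridge_dist D i j\<bar> \<le> 1"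
  unfolding bridge_dist_def wave_def mod_Suc by (auto split: if_splits)

lemma bridge_dist_at_bridge: "bridge n D i j \<Longrightarrow> bridge_dist D i j = 0"
  using bridge_phase_cases[of D i] by (auto simp: bridge_dist_def wave_def bridge_def)

lemma bridge_dist_at_next_bridge:
  assumes "0 < D" "bridge n D i j" "barrier_row n (i + 2)"
  shows "bridge_dist D (i + 2) j = int D"
  using assms bridge_phase_add_2[of i D] bridge_phase_cases[of D i] bridge_phase_cases[of D "i + 2"]
  by (auto simp: bridge_dist_def wave_def bridge_def barrier_row_def)

text \<open>Along a walk through ones of \<open>hard_input n D\<close> the potential grows by at most one per
  step, whereas from the top row to the bottom row it grows by about \<open>D\<close> per barrier row.\<close>

definition potential :: "nat \<Rightarrow> nat \<Rightarrow> nat \<times> nat \<Rightarrow> int" where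
  "potential n D p = (let r = fst p; j = snd p in
     int r + int D * int (r div 2) -
     (if barrier_row n r then 0
      else if barrier_row n (r + 1) then bridge_dist D (r + 1) j
      else int D))"

lemma potential_step:
  assumes D: "0 < D" and adj: "adjacent p q" and ones: "hard_input n D p" "hard_input n D q"
    and below: "fst q < n"
  shows "potential n D q \<le> potential n D p + 1"
proof -
  obtain r j r' j' where p: "p = (r, j)" and q: "q = (r', j')"
    by fastforce
  from adj consider (right) "r' = r" "j' = Suc j" | (left) "r' = r" "j = Suc j'"
    | (down) "j' = j" "r' = Suc r" | (up) "j' = j" "r = Suc r'"
    unfolding adjacent_def p q by auto
  then show ?thesis
  proof cases
    case right
    then show ?thesis
      using bridge_dist_Suc[OF D, of "r + 1" j] unfolding p q potential_def by auto
  next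
    case left
    then show ?thesis
      using bridge_dist_Suc[OF D, of "r + 1" j'] unfolding p q potential_def by auto
  next
    case down
    consider (from_barrier) "barrier_row n r" | (onto_barrier) "barrier_row n (Suc r)"
      | (free) "\<not> barrier_row n r" "\<not> barrier_row n (Suc r)"
      by blast
    then show ?thesis
    proof cases
      case from_barrier
      have "bridge n D r j"
        using ones(1) from_barrier p by (simp add: hard_input_def)
      then have "barrier_row n (r + 2) \<Longrightarrow> bridge_dist D (r + 2) j = int D"
        using bridge_dist_at_next_bridge[OF D] by blast
      moreover have "Suc r div 2 = r div 2 + 1"
        using from_barrier by (simp add: barrier_row_def)
      ultimately show ?thesis
        using from_barrier not_barrier_row_Suc[OF from_barrier]
          bridge_dist_bounds[OF D, of "r + 2" j]
        unfolding p q down potential_def by (auto simp: algebra_simps)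
    next
      case onto_barrier
      have "bridge n D (Suc r) j"
        using ones(2) onto_barrier q down by (simp add: hard_input_def)
      then have "bridge_dist D (r + 1) j = 0"
        using bridge_dist_at_bridge by simp
      moreover have "Suc r div 2 = r div 2"
        using onto_barrier by (simp add: barrier_row_def)
      ultimately show ?thesis
        using onto_barrier not_barrier_row_pred[OF onto_barrier] unfolding p q down potential_def
        by auto
    next
      case free
      have "Suc r < n"
        using below q down by simp
      then have "even r" "\<not> barrier_row n (Suc (Suc r))"
        using free by (auto simp: barrier_row_def)
      then show ?thesis
        using free unfolding p q down potential_def by auto
    qed
  next
    case up
    consider (onto_barrier) "barrier_row n r'" | (from_barrier) "barrier_row n r"
      | (free) "\<not> barrier_row n r'" "\<not> barrier_row n r"
      by blast
    then show ?thesis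
    proof cases
      case onto_barrier
      then have "r div 2 = r' div 2 + 1" "\<not> barrier_row n r"
        using up by (auto simp: barrier_row_def)
      then show ?thesis
        using onto_barrier bridge_dist_bounds[OF D, of "r + 1" j] unfolding p q up potential_def
        by (auto simp: algebra_simps)
    next
      case from_barrier
      then have "r div 2 = r' div 2"
        using up by (auto simp: barrier_row_def)
      then show ?thesis
        using from_barrier not_barrier_row_pred[of n r'] bridge_dist_bounds[OF D, of "r' + 1" j]
        unfolding p q up potential_def by auto
    next
      case free
      have "int D * int (r' div 2) \<le> int D * int (r div 2)"
        using up by (simp add: mult_left_mono div_le_mono)
      then show ?thesis
        using free bridge_dist_bounds[OF D, of "r + 1" j] unfolding p q up potential_def by auto
    qed
  qed
qed

lemma one_path_hard_input_long:
  assumes D: "4 \<le> D" and n: "9 \<le> n" and path: "one_path n (hard_input n D) ps"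
  shows "2 * n < length ps"
proof -
  have D0: "0 < D"
    using D by simp
  have walk: "ps \<noteq> []" "set ps \<subseteq> grid n" "successively adjacent ps"
    using path unfolding one_path_def is_walk_iff_successively by auto
  have "potential n D (last ps) \<le> potential n D (hd ps) + int (length ps - 1)"
  proof (rule successively_last_le[OF walk(3,1)])
    fix p q
    assume "p \<in> set ps" "q \<in> set ps" "adjacent p q"
    moreover have "fst q < n"
      using \<open>q \<in> set ps\<close> walk(2) by (auto simp: grid_def)
    ultimately show "potential n D q \<le> potential n D p + 1"
      using potential_step[OF D0] path by (auto simp: one_path_def)
  qed
  moreover have "potential n D (hd ps) \<le> 0"
    using path bridge_dist_bounds[OF D0, of 1 "snd (hd ps)"] D0
    by (auto simp: one_path_def potential_def barrier_row_def)
  moreover have "potential n D (last ps) = int (n - 1) + int D * int ((n - 1) div 2) - int D"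
    using path n by (auto simp: one_path_def potential_def barrier_row_def)
  ultimately have le: "int (n - 1) + int D * int ((n - 1) div 2) - int D \<le> int (length ps - 1)"
    by linarith
  have "4 * ((n - 1) div 2 - 1) \<le> D * ((n - 1) div 2 - 1)"
    using D by simp
  moreover have "1 \<le> (n - 1) div 2"
    using n by linarith
  then have "D * ((n - 1) div 2 - 1) + D = D * ((n - 1) div 2)"
    by (simp add: diff_mult_distrib2)
  ultimately have "2 * n + D \<le> n - 1 + D * ((n - 1) div 2)"
    using n by linarith
  then have "int (2 * n) + int D \<le> int (n - 1) + int D * int ((n - 1) div 2)"
    by (simp flip: of_nat_mult of_nat_add)
  then show ?thesis
    using le walk(1) by (cases ps) auto
qed

text \<open>A zero path starts in a barrier row and cannot leave it, but is blocked by a bridge.\<close>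

lemma no_zero_path_hard_input:
  assumes D0: "0 < D" and n: "3 * D < n"
  shows "\<not> zero_path n (hard_input n D) ps"
proof
  assume path: "zero_path n (hard_input n D) ps"
  have walk: "ps \<noteq> []" "successively adjacent ps"
    using path unfolding zero_path_def is_walk_iff_successively by auto
  have zeros: "\<forall>p\<in>set ps. \<not> hard_input n D p"
    using path unfolding zero_path_def by auto
  define i where "i = fst (hd ps)"
  have barrier: "barrier_row n i"
    using zeros walk(1) unfolding i_def by (auto simp: hard_input_def)
  define b where "b = (if bridge_phase D i = 0 then 2 * D else D)"
  have bridge: "bridge n D i b"
    using barrier n D0 bridge_phase_cases[of D i] unfolding bridge_def b_def by auto
  have "fst (last ps) = i \<and> snd (last ps) < b"
  proof (rule successively_invariant[OF walk(2,1)])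
    show "fst (hd ps) = i \<and> snd (hd ps) < b"
      using path D0 by (auto simp: zero_path_def i_def b_def)
  next
    fix p q
    assume pq: "p \<in> set ps" "q \<in> set ps" "adjacent p q" "fst p = i \<and> snd p < b"
    have "barrier_row n (fst q)"
      using zeros pq(2) by (auto simp: hard_input_def)
    then have "fst q = i"
      using pq(3,4) barrier not_barrier_row_Suc[of n i] not_barrier_row_pred[of n "fst q"]
      by (auto simp: adjacent_def)
    moreover have "snd q \<noteq> b"
      using bridge zeros pq(2) \<open>fst q = i\<close> by (auto simp: hard_input_def)
    ultimately show "fst q = i \<and> snd q < b"
      using pq(3,4) by (auto simp: adjacent_def)
  qed
  moreover have "snd (last ps) = n - 1"
    using path by (simp add: zero_path_def)
  moreover have "b < n"
    using bridge by (simp add: bridge_def)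
  ultimately show False
    by linarith
qed

lemma Hex_hard_input:
  assumes "4 \<le> D" "3 * D < n" "9 \<le> n"
  shows "Hex n (hard_input n D) = HStar"
proof -
  have "\<not> (one_path n (hard_input n D) ps \<and> length ps \<le> 2 * n)" for ps
    using one_path_hard_input_long[of D n ps] assms by linarith
  moreover have "\<not> zero_path n (hard_input n D) ps" for ps
    using no_zero_path_hard_input[of D n] assms by simp
  ultimately show ?thesis
    by (simp add: Hex_def)
qed

lemma bridge_column_below:
  assumes "0 < D" "3 * D \<le> c" "c + D < n" "barrier_row n i"
  obtains b where "bridge n D i b" "b \<le> c" "c < b + 2 * D"
proof -
  define r where "r = bridge_phase D i"
  define b where "b = r + 2 * D * ((c - r) div (2 * D))"
  have r: "r \<le> D"
    using bridge_phase_cases[of D i] by (auto simp: r_def)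
  have split: "c - r = 2 * D * ((c - r) div (2 * D)) + (c - r) mod (2 * D)"
    by simp
  have far: "2 * D \<le> c - r"
    using assms(2) r by linarith
  then have "1 \<le> (c - r) div (2 * D)"
    using div_le_mono[OF far, of "2 * D"] assms(1) by simp
  then have "2 * D \<le> b"
    unfolding b_def using mult_le_mono2[of 1 "(c - r) div (2 * D)" "2 * D"] by linarith
  moreover have "b \<le> c" "c < b + 2 * D"
    using split r assms mod_less_divisor[of "2 * D" "c - r"] unfolding b_def by linarith+
  moreover have "b mod (2 * D) = r"
    unfolding b_def using r assms(1) by simp
  ultimately show ?thesis
    using assms(3,4) by (intro that[of b]) (auto simp: bridge_def r_def)
qed

lemma card_bridges_le:
  assumes "0 < D"
  shows "card {b. bridge n D i b} \<le> n div (2 * D) + 1"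
proof -
  have "{b. bridge n D i b} \<subseteq> (\<lambda>q. 2 * D * q + bridge_phase D i) ` {..n div (2 * D)}"
  proof
    fix b
    assume "b \<in> {b. bridge n D i b}"
    then have b: "b mod (2 * D) = bridge_phase D i" "b < n"
      by (auto simp: bridge_def)
    have "b = 2 * D * (b div (2 * D)) + bridge_phase D i"
      using b(1) by (metis div_mult_mod_eq mult.commute)
    moreover have "b div (2 * D) \<le> n div (2 * D)"
      using b(2) by (simp add: div_le_mono)
    ultimately show "b \<in> (\<lambda>q. 2 * D * q + bridge_phase D i) ` {..n div (2 * D)}"
      by blast
  qed
  then have "card {b. bridge n D i b}
      \<le> card ((\<lambda>q. 2 * D * q + bridge_phase D i) ` {..n div (2 * D)})"
    by (intro card_mono) auto
  also have "\<dots> \<le> n div (2 * D) + 1"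
    using card_image_le[of "{..n div (2 * D)}"] by simp
  finally show ?thesis .
qed

lemma Hex_cong:
  assumes "\<And>p. p \<in> grid n \<Longrightarrow> x p = y p"
  shows "Hex n x = Hex n y"
proof -
  have "one_path n x = one_path n y" "zero_path n x = zero_path n y"
    using assms unfolding one_path_def zero_path_def is_walk_def by (intro ext; blast)+
  then show ?thesis
    by (simp add: Hex_def)
qed

lemma cert_complexity_attained:
  assumes "Hex n x \<in> \<Sigma>"
  obtains \<rho> where "is_certificate n \<Sigma> x \<rho>" "psize n \<rho> = cert_complexity n \<Sigma> x"
proof -
  let ?P = "\<lambda>k. \<exists>\<rho>. is_certificate n \<Sigma> x \<rho> \<and> psize n \<rho> = k"
  have "Hex n x' \<in> \<Sigma>" if "consistent n (\<lambda>p. Some (x p)) x'" for x'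
    using assms Hex_cong[of n x' x] that by (simp add: consistent_def)
  then have "is_certificate n \<Sigma> x (\<lambda>p. Some (x p))"
    by (simp add: is_certificate_def consistent_def)
  then have "?P (LEAST k. ?P k)"
    by (intro LeastI[of ?P]) blast
  then show ?thesis
    using that unfolding cert_complexity_def by blast
qed

lemma certificate_agrees:
  "is_certificate n \<Sigma> x \<rho> \<Longrightarrow> p \<in> grid n \<Longrightarrow> \<rho> p = Some b \<Longrightarrow> x p = b"
  by (auto simp: is_certificate_def consistent_def)

lemma Hex_completions_of_certificate:
  assumes "is_certificate n \<Sigma> x \<rho>"
  shows "Hex n (\<lambda>p. \<rho> p = Some True) \<in> \<Sigma>" "Hex n (\<lambda>p. \<rho> p \<noteq> Some False) \<in> \<Sigma>"
  using assms by (auto simp: is_certificate_def consistent_def)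

lemma card_fixed_le_psize: "card {p \<in> grid n. \<rho> p = Some b} \<le> psize n \<rho>"
  unfolding psize_def by (intro card_mono) (auto simp: grid_def)

lemma sum_card_fibers_le:
  assumes "finite A" "finite I"
  shows "(\<Sum>i\<in>I. card {p\<in>A. f p = i}) \<le> card A"
proof -
  have "(\<Sum>i\<in>I. card {p\<in>A. f p = i}) = card (\<Union>i\<in>I. {p\<in>A. f p = i})"
    using assms by (intro card_UN_disjoint[symmetric]) auto
  also have "\<dots> \<le> card A"
    using assms by (intro card_mono) auto
  finally show ?thesis .
qed

section \<open>Certificates excluding a short one-path\<close>

text \<open>Walk straight down column \<open>c\<close>, and around every blocked barrier cell \<open>(i, c)\<close> through
  the nearest bridge to the left, at a cost of at most \<open>4D\<close> extra steps.\<close>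

lemma one_path_around_blocked_cells:
  assumes D0: "0 < D" and c: "3 * D \<le> c" "c + 3 * D < n"
    and blocked: "\<And>i. blk i \<Longrightarrow> barrier_row n i \<and> \<not> bridge n D i c"
    and ones: "\<And>p. p \<in> grid n \<Longrightarrow> hard_input n D p \<or> (snd p = c \<and> \<not> blk (fst p)) \<Longrightarrow> y p"
  obtains W where "one_path n y W" "length W \<le> n + 4 * D * card {i. i < n \<and> blk i}"
proof -
  have "\<exists>b. blk i \<longrightarrow> bridge n D i b \<and> b < c \<and> c < b + 2 * D" for i
  proof (cases "blk i")
    case True
    moreover have "c + D < n"
      using c(2) by linarith
    ultimately obtain b where "bridge n D i b" "b \<le> c" "c < b + 2 * D"
      using bridge_column_below[OF D0 c(1)] blocked by blast
    then show ?thesis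
      using blocked[OF True] le_neq_implies_less by blast
  qed simp
  then obtain b where b: "\<And>i. blk i \<Longrightarrow> bridge n D i (b i) \<and> b i < c \<and> c < b i + 2 * D"
    by metis
  define seg where "seg i = (if blk i then rev (map (\<lambda>j. (i - 1, j)) [b i..<c]) @ [(i, b i)]
      @ map (\<lambda>j. (Suc i, j)) [b i..<c] else [(i, c)])" for i
  define W where "W = concat (map seg [0..<n])"
  have blk_row: "1 \<le> i \<and> Suc i < n \<and> \<not> blk (i - 1) \<and> \<not> blk (Suc i)" if "blk i" for i
    using blocked[of i] blocked[of "i - 1"] blocked[of "Suc i"] that
    by (auto simp: barrier_row_def odd_pos Suc_le_eq)
  have seg_walk: "seg i \<noteq> [] \<and> successively adjacent (seg i) \<and> set (seg i) \<subseteq> grid n"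
    if "i < n" for i
    using successively_adjacent_detour[of "b i" c "i - 1"] b[of i] blk_row[of i] that c
    by (cases "blk i") (auto simp: seg_def grid_def)
  have hd_seg: "hd (seg i) = (if blk i then (i - 1, c - 1) else (i, c))" for i
    using b[of i] by (auto simp: seg_def hd_append hd_rev last_map)
  have last_seg: "last (seg i) = (if blk i then (Suc i, c - 1) else (i, c))" for i
    using b[of i] by (auto simp: seg_def last_map)
  have "0 < c"
    using c D0 by simp
  then have "adjacent (last (seg i)) (hd (seg (Suc i)))" for i
    using blk_row[of i] blk_row[of "Suc i"] by (auto simp: hd_seg last_seg adjacent_def)
  moreover have "0 < n" "\<not> blk 0" "\<not> blk (n - 1)"
    using c blk_row[of 0] blk_row[of "n - 1"] by auto
  ultimately have walk: "is_walk n W" "hd W = (0, c)" "last W = (n - 1, c)"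
    using is_walk_concat_segments[of n seg n] seg_walk unfolding W_def
    by (auto simp: hd_seg last_seg)
  have seg_ones: "hard_input n D p \<or> (snd p = c \<and> \<not> blk (fst p))" if "p \<in> set (seg i)" for i p
    using that b[of i] blk_row[of i] blocked[of i]
    by (cases "blk i") (auto simp: seg_def hard_input_def barrier_row_def)
  have "y p" if pW: "p \<in> set W" for p
  proof -
    obtain i where "p \<in> set (seg i)"
      using pW unfolding W_def by auto
    moreover have "p \<in> grid n"
      using pW walk(1) by (auto simp: is_walk_def)
    ultimately show ?thesis
      using ones seg_ones by blast
  qed
  then have path: "one_path n y W"
    using walk by (simp add: one_path_def)
  have "length (seg i) \<le> 1 + (if blk i then 4 * D else 0)" for i
    using b[of i] by (auto simp: seg_def)
  then have "length W \<le> (\<Sum>i<n. 1 + (if blk i then 4 * D else 0))"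
    unfolding W_def length_concat_map_upt by (rule sum_mono)
  also have "\<dots> = n + 4 * D * card {i. i < n \<and> blk i}"
    by (simp only: sum.distrib sum_if_lessThan) simp
  finally show ?thesis
    using that path by blast
qed

lemma not1_certificate_column:
  assumes D0: "0 < D" and cert: "is_certificate n not1 (hard_input n D) \<rho>"
    and c: "3 * D \<le> c" "c + 3 * D < n"
  shows "n < 4 * D * card {i. i < n \<and> barrier_row n i \<and> \<rho> (i, c) = Some False}"
proof (rule ccontr)
  let ?blk = "\<lambda>i. barrier_row n i \<and> \<rho> (i, c) = Some False"
  let ?y = "\<lambda>p. \<rho> p \<noteq> Some False"
  assume small: "\<not> ?thesis"
  have agrees: "\<rho> p \<noteq> Some False" if "p \<in> grid n" "hard_input n D p" for p
    using certificate_agrees[OF cert that(1)] that(2) by auto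
  have "\<not> bridge n D i c" if "?blk i" for i
  proof
    assume "bridge n D i c"
    then have "(i, c) \<in> grid n" "hard_input n D (i, c)"
      by (auto simp: bridge_def barrier_row_def grid_def hard_input_def)
    then show False
      using agrees that by blast
  qed
  moreover have "?y p" if "p \<in> grid n" "hard_input n D p \<or> (snd p = c \<and> \<not> ?blk (fst p))" for p
    using that agrees[OF that(1)] by (cases p) (auto simp: hard_input_def)
  ultimately obtain W where W: "one_path n ?y W" "length W \<le> n + 4 * D * card {i. i < n \<and> ?blk i}"
    using one_path_around_blocked_cells[OF D0 c, of ?blk ?y] by blast
  then have "Hex n ?y = HOne"
    using small unfolding Hex_def by force
  then show False
    using Hex_completions_of_certificate(2)[OF cert] by simp
qed

lemma not1_certificate_size:
  assumes D0: "0 < D" and cert: "is_certificate n not1 (hard_input n D) \<rho>" and n: "6 * D \<le> n"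
  shows "(n - 6 * D) * n \<le> 4 * D * psize n \<rho>"
proof -
  define Z where "Z = {p \<in> grid n. \<rho> p = Some False}"
  define C where "C = {3 * D..<n - 3 * D}"
  have "finite Z"
    unfolding Z_def grid_def by simp
  have "n \<le> 4 * D * card {p\<in>Z. snd p = c}" if "c \<in> C" for c
  proof -
    let ?K = "{i. i < n \<and> barrier_row n i \<and> \<rho> (i, c) = Some False}"
    have "card ?K = card ((\<lambda>i. (i, c)) ` ?K)"
      by (simp add: card_image inj_on_def)
    also have "\<dots> \<le> card {p\<in>Z. snd p = c}"
      using \<open>finite Z\<close> that by (intro card_mono) (auto simp: Z_def C_def grid_def)
    finally have "4 * D * card ?K \<le> 4 * D * card {p\<in>Z. snd p = c}"
      by simp
    moreover have "n < 4 * D * card ?K"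
      using that n unfolding C_def by (intro not1_certificate_column[OF D0 cert]) auto
    ultimately show ?thesis
      by linarith
  qed
  then have "card C * n \<le> (\<Sum>c\<in>C. 4 * D * card {p\<in>Z. snd p = c})"
    using sum_mono[of C "\<lambda>_. n"] by simp
  also have "\<dots> = 4 * D * (\<Sum>c\<in>C. card {p\<in>Z. snd p = c})"
    by (simp add: sum_distrib_left)
  also have "\<dots> \<le> 4 * D * card Z"
    using sum_card_fibers_le[OF \<open>finite Z\<close>, of C snd] by (simp add: C_def)
  also have "\<dots> \<le> 4 * D * psize n \<rho>"
    unfolding Z_def using card_fixed_le_psize by simp
  finally show ?thesis
    by (simp add: C_def)
qed

section \<open>Certificates excluding a short zero-path\<close>

definition covered_by :: "'a set \<Rightarrow> ('a \<Rightarrow> nat) \<Rightarrow> ('a \<Rightarrow> nat) \<Rightarrow> nat \<Rightarrow> bool" where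
  "covered_by B l r j \<longleftrightarrow> (\<exists>b\<in>B. l b \<le> j \<and> j \<le> r b)"

lemma covered_by_left_end:
  assumes "covered_by B l r j" "\<not> covered_by B l r (j - 1)"
  shows "j \<in> l ` B"
proof -
  obtain b where b: "b \<in> B" "l b \<le> j" "j \<le> r b"
    using assms(1) by (auto simp: covered_by_def)
  then have "\<not> l b \<le> j - 1"
    using assms(2) by (auto simp: covered_by_def)
  then have "j = l b"
    using b(2) by linarith
  then show ?thesis
    using b(1) by blast
qed

lemma covered_by_right_end:
  assumes "covered_by B l r j" "\<not> covered_by B l r (Suc j)"
  shows "j \<in> r ` B"
proof -
  obtain b where b: "b \<in> B" "l b \<le> j" "j \<le> r b"
    using assms(1) by (auto simp: covered_by_def)
  then have "\<not> Suc j \<le> r b"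
    using assms(2) by (auto simp: covered_by_def)
  then have "j = r b"
    using b(3) by linarith
  then show ?thesis
    using b(1) by blast
qed

text \<open>Walk along barrier row \<open>i\<close>, and around every bridge \<open>b\<close> through row \<open>i - 2\<close>, entering and
  leaving it through the cells \<open>(i - 1, l b)\<close> and \<open>(i - 1, r b)\<close>. Since the bridges of row
  \<open>i - 2\<close> are at distance at least \<open>D\<close> from those of row \<open>i\<close>, the part in row \<open>i - 2\<close> is zero.\<close>

lemma zero_path_around_bridges:
  assumes D0: "0 < D" and i: "barrier_row n i" "3 \<le> i"
    and around: "\<And>b. bridge n D i b \<Longrightarrow> l b < b \<and> b < l b + D \<and> b < r b \<and> r b < b + D"
    and zeros: "\<And>p. p \<in> grid n \<Longrightarrow> \<not> hard_input n D p \<Longrightarrow> \<not> y p"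
    and gates: "\<And>b. bridge n D i b \<Longrightarrow> \<not> y (i - 1, l b) \<and> \<not> y (i - 1, r b)"
  obtains W where "zero_path n y W" "length W \<le> n + 4 * card {b. bridge n D i b}"
proof -
  define B where "B = {b. bridge n D i b}"
  define covered where "covered = covered_by B l r"
  define enters where "enters j \<longleftrightarrow> covered j \<and> \<not> covered (j - 1)" for j
  define leaves where "leaves j \<longleftrightarrow> covered j \<and> \<not> covered (Suc j)" for j
  define seg where "seg j = (if enters j then [(i, j), (i - 1, j)] else [])
      @ [(if covered j then i - 2 else i, j)]
      @ (if leaves j then [(i - 1, j), (i, j)] else [])" for j
  define W where "W = concat (map seg [0..<n])"
  have finB: "finite B"
    unfolding B_def by (rule finite_subset[of _ "{..<n}"]) (auto simp: bridge_def)
  have covered_zero: "\<not> hard_input n D (i - 2, j) \<and> j < n" if cov: "covered j" for j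
  proof -
    obtain b where b: "bridge n D i b" "l b \<le> j" "j \<le> r b"
      using cov by (auto simp: covered_def covered_by_def B_def)
    moreover have "i - 2 + 2 = i"
      using i(2) by simp
    ultimately have next_bridge: "bridge n D (i - 2 + 2) b"
      by simp
    have "barrier_row n (i - 2)"
      using i by (auto simp: barrier_row_def)
    moreover have "\<not> bridge n D (i - 2) j"
      using bridges_of_next_barrier_far[OF D0 _ next_bridge, of j] around[of b] b by auto
    moreover have "j < n"
      using b around[of b] by (auto simp: bridge_def)
    ultimately show ?thesis
      by (simp add: hard_input_def)
  qed
  have not_covered_ends: "\<not> covered 0" "\<not> covered (n - 1)"
    using around by (fastforce simp: covered_def covered_by_def B_def bridge_def)+
  have covered_near_bridge: "covered (b - 1) \<and> covered b \<and> covered (Suc b)" if "b \<in> B" for b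
    using that around[of b] unfolding covered_def covered_by_def B_def by force
  have seg_walk: "seg j \<noteq> [] \<and> successively adjacent (seg j) \<and> set (seg j) \<subseteq> grid n"
    if "j < n" for j
    using i that unfolding seg_def enters_def leaves_def
    by (auto simp: successively_append_iff successively_Cons adjacent_def grid_def barrier_row_def)
  have "adjacent (last (seg j)) (hd (seg (Suc j)))" for j
    by (auto simp: seg_def enters_def leaves_def adjacent_def)
  moreover have "0 < n" "seg 0 = [(i, 0)]" "seg (n - 1) = [(i, n - 1)]"
    using i not_covered_ends by (simp_all add: barrier_row_def seg_def enters_def leaves_def)
  ultimately have walk: "is_walk n W" "hd W = (i, 0)" "last W = (i, n - 1)"
    using is_walk_concat_segments[of n seg n] seg_walk unfolding W_def by auto
  have seg_zeros: "\<not> y p" if "j < n" "p \<in> set (seg j)" for j p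
  proof -
    have "p \<in> grid n"
      using seg_walk that by blast
    moreover have "(p = (i, j) \<and> \<not> bridge n D i j) \<or> (p = (i - 2, j) \<and> covered j)
        \<or> (\<exists>b\<in>B. p = (i - 1, l b) \<or> p = (i - 1, r b))"
      using that(2) covered_near_bridge
        covered_by_left_end[of B l r j] covered_by_right_end[of B l r j]
      by (auto simp: seg_def enters_def leaves_def covered_def B_def split: if_splits)
    ultimately show ?thesis
      using zeros covered_zero gates i by (auto simp: B_def hard_input_def)
  qed
  have "\<not> y p" if pW: "p \<in> set W" for p
  proof -
    obtain j where "j < n" "p \<in> set (seg j)"
      using pW unfolding W_def by auto
    then show ?thesis
      by (rule seg_zeros)
  qed
  then have path: "zero_path n y W"
    using walk by (simp add: zero_path_def)
  have "{j. j < n \<and> enters j} \<subseteq> l ` B" "{j. j < n \<and> leaves j} \<subseteq> r ` B"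
    using covered_by_left_end covered_by_right_end unfolding enters_def leaves_def covered_def
    by blast+
  then have gates_card: "card {j. j < n \<and> enters j} \<le> card B" "card {j. j < n \<and> leaves j} \<le> card B"
    using card_mono[OF finite_imageI[OF finB]] card_image_le[OF finB] by (meson order.trans)+
  have "length (seg j) = 1 + (if enters j then 2 else 0) + (if leaves j then 2 else 0)" for j
    by (simp add: seg_def)
  then have "length W = (\<Sum>j<n. 1 + (if enters j then 2 else 0) + (if leaves j then 2 else 0))"
    unfolding W_def length_concat_map_upt by simp
  also have "\<dots> = n + 2 * card {j. j < n \<and> enters j} + 2 * card {j. j < n \<and> leaves j}"
    by (simp only: sum.distrib sum_if_lessThan) simp
  finally show ?thesis
    using that path gates_card unfolding B_def by simp
qed

text \<open>Otherwise the unfixed cells next to the bridges serve as gates \<open>l b\<close>, \<open>r b\<close> of a zero path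
  of length at most \<open>n + 4 (n div 2D + 1) \<le> 2n\<close>, while short one-paths are excluded as for
  \<open>hard_input n D\<close> itself.\<close>

lemma not0_certificate_row:
  assumes D: "4 \<le> D" and n: "9 \<le> n" and cert: "is_certificate n not0 (hard_input n D) \<rho>"
    and i: "barrier_row n i" "3 \<le> i"
  obtains b where "bridge n D i b"
    "(\<forall>j. b < j + D \<and> j < b \<longrightarrow> \<rho> (i - 1, j) = Some True) \<or>
     (\<forall>j. b < j \<and> j < b + D \<longrightarrow> \<rho> (i - 1, j) = Some True)"
proof (rule ccontr)
  let ?y = "\<lambda>p. \<rho> p = Some True"
  assume "\<not> thesis"
  then have "\<forall>b. \<exists>l r. bridge n D i b \<longrightarrow> (b < l + D \<and> l < b \<and> \<not> ?y (i - 1, l)) \<and>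
      (b < r \<and> r < b + D \<and> \<not> ?y (i - 1, r))"
    using that by blast
  then obtain l r where lr: "\<And>b. bridge n D i b \<Longrightarrow> (b < l b + D \<and> l b < b \<and> \<not> ?y (i - 1, l b)) \<and>
      (b < r b \<and> r b < b + D \<and> \<not> ?y (i - 1, r b))"
    by metis
  have D0: "0 < D"
    using D by simp
  have agrees: "\<not> ?y p" if "p \<in> grid n" "\<not> hard_input n D p" for p
    using certificate_agrees[OF cert that(1)] that(2) by auto
  obtain W where W: "zero_path n ?y W" "length W \<le> n + 4 * card {b. bridge n D i b}"
    using zero_path_around_bridges[OF D0 i, of l r ?y] lr agrees by blast
  have "card {b. bridge n D i b} \<le> n div 8 + 1"
    using card_bridges_le[OF D0, of n i] div_le_mono2[of 8 "2 * D" n] D by simp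
  then have "length W \<le> 2 * n"
    using W(2) n by presburger
  moreover have "\<not> (one_path n ?y ps \<and> length ps \<le> 2 * n)" for ps
    using one_path_mono[of n ?y "hard_input n D" ps] certificate_agrees[OF cert]
      one_path_hard_input_long[OF D n, of ps] by fastforce
  ultimately have "Hex n ?y = HZero"
    using W(1) unfolding Hex_def by auto
  then show False
    using Hex_completions_of_certificate(1)[OF cert] by simp
qed

lemma not0_certificate_row_ones:
  assumes D: "4 \<le> D" and n: "9 \<le> n" and cert: "is_certificate n not0 (hard_input n D) \<rho>"
    and i: "barrier_row n i" "3 \<le> i"
  shows "D - 1 \<le> card {j. j < n \<and> \<rho> (i - 1, j) = Some True}"
proof -
  obtain b where b: "bridge n D i b" and
    fixed: "(\<forall>j. b < j + D \<and> j < b \<longrightarrow> \<rho> (i - 1, j) = Some True) \<or>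
      (\<forall>j. b < j \<and> j < b + D \<longrightarrow> \<rho> (i - 1, j) = Some True)"
    using not0_certificate_row[OF D n cert i] by blast
  obtain J where J: "card J = D - 1" "J \<subseteq> {j. j < n \<and> \<rho> (i - 1, j) = Some True}"
  proof (cases "\<forall>j. b < j + D \<and> j < b \<longrightarrow> \<rho> (i - 1, j) = Some True")
    case True
    show ?thesis
    proof (rule that)
      show "card {b + 1 - D..<b} = D - 1"
        using b by (simp add: bridge_def)
      show "{b + 1 - D..<b} \<subseteq> {j. j < n \<and> \<rho> (i - 1, j) = Some True}"
        using True b by (auto simp: bridge_def)
    qed
  next
    case False
    show ?thesis
    proof (rule that)
      show "card {b + 1..<b + D} = D - 1"
        by simp
      show "{b + 1..<b + D} \<subseteq> {j. j < n \<and> \<rho> (i - 1, j) = Some True}"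
        using False fixed b by (auto simp: bridge_def)
    qed
  qed
  then show ?thesis
    by (metis card_mono finite_Collect_conjI finite_Collect_less_nat)
qed

lemma not0_certificate_size:
  assumes D: "4 \<le> D" and n: "9 \<le> n" and cert: "is_certificate n not0 (hard_input n D) \<rho>"
  shows "(n - 5) div 2 * (D - 1) \<le> psize n \<rho>"
proof -
  define S where "S = {p \<in> grid n. \<rho> p = Some True}"
  define I where "I = {i. barrier_row n i \<and> 3 \<le> i}"
  have finS: "finite S"
    unfolding S_def grid_def by simp
  have finI: "finite I"
    unfolding I_def barrier_row_def by (rule finite_subset[of _ "{..<n}"]) auto
  have "D - 1 \<le> card {p\<in>S. fst p = i - 1}" if iI: "i \<in> I" for i
  proof -
    have "{p\<in>S. fst p = i - 1} = (\<lambda>j. (i - 1, j)) ` {j. j < n \<and> \<rho> (i - 1, j) = Some True}"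
      using iI by (auto simp: S_def I_def grid_def barrier_row_def)
    then show ?thesis
      using not0_certificate_row_ones[OF D n cert] iI by (simp add: card_image inj_on_def I_def)
  qed
  then have "card I * (D - 1) \<le> (\<Sum>i\<in>I. card {p\<in>S. fst p = i - 1})"
    using sum_mono[of I "\<lambda>_. D - 1"] by simp
  also have "\<dots> = (\<Sum>r\<in>(\<lambda>i. i - 1) ` I. card {p\<in>S. fst p = r})"
  proof -
    have "inj_on (\<lambda>i. i - 1) I"
      by (auto simp: inj_on_def I_def)
    then show ?thesis
      by (simp add: sum.reindex)
  qed
  also have "\<dots> \<le> card S"
    using sum_card_fibers_le[OF finS, of "(\<lambda>i. i - 1) ` I" fst] finI by simp
  also have "\<dots> \<le> psize n \<rho>"
    unfolding S_def by (rule card_fixed_le_psize)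
  finally have "card I * (D - 1) \<le> psize n \<rho>" .
  have "(\<lambda>q. 2 * q + 3) ` {..<(n - 5) div 2} \<subseteq> I"
    unfolding I_def barrier_row_def by auto
  then have "card ((\<lambda>q. 2 * q + 3) ` {..<(n - 5) div 2}) \<le> card I"
    by (rule card_mono[OF finI])
  then have "(n - 5) div 2 \<le> card I"
    by (simp add: card_image inj_on_def)
  then show ?thesis
    using \<open>card I * (D - 1) \<le> psize n \<rho>\<close> by (meson mult_le_mono1 le_trans)
qed

lemma cert_complexity_hard_input:
  assumes D: "4 \<le> D" and n: "6 * D \<le> n" "9 \<le> n"
  shows "(n - 5) div 2 * (D - 1) \<le> cert_complexity n not0 (hard_input n D)"
    and "(n - 6 * D) * n \<le> 4 * D * cert_complexity n not1 (hard_input n D)"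
proof -
  have D0: "0 < D"
    using D by simp
  have star: "Hex n (hard_input n D) = HStar"
    using Hex_hard_input D n by simp
  obtain \<rho>0 where "is_certificate n not0 (hard_input n D) \<rho>0"
      "psize n \<rho>0 = cert_complexity n not0 (hard_input n D)"
    using cert_complexity_attained[of n "hard_input n D" not0] star by auto
  then show "(n - 5) div 2 * (D - 1) \<le> cert_complexity n not0 (hard_input n D)"
    using not0_certificate_size[OF D n(2)] by metis
  obtain \<rho>1 where "is_certificate n not1 (hard_input n D) \<rho>1"
      "psize n \<rho>1 = cert_complexity n not1 (hard_input n D)"
    using cert_complexity_attained[of n "hard_input n D" not1] star by auto
  then show "(n - 6 * D) * n \<le> 4 * D * cert_complexity n not1 (hard_input n D)"
    using not1_certificate_size[OF D0 _ n(1)] by metis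
qed

lemma powr_three_halves: "0 \<le> (x::real) \<Longrightarrow> x powr 1.5 = x * sqrt x"
  using powr_add[of x 1 "1/2"] by (cases "x = 0") (simp_all add: powr_half_sqrt)

lemma floor_sqrt_bounds:
  assumes n: "10000 \<le> n"
  defines "D \<equiv> nat \<lfloor>sqrt (real n)\<rfloor>"
  shows "4 \<le> D" "6 * D \<le> n"
    and "real n powr 1.5 / 8 \<le> real ((n - 5) div 2 * (D - 1))"
    and "4 * real D * (real n powr 1.5 / 8) \<le> real ((n - 6 * D) * n)"
proof -
  define s where "s = sqrt (real n)"
  have ss: "s * s = real n"
    unfolding s_def by simp
  have pw: "real n powr 1.5 = real n * s"
    unfolding s_def by (rule powr_three_halves) simp
  have "100 \<le> s"
    unfolding s_def using n real_le_rsqrt[of 100 "real n"] by simp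
  moreover have "real D = of_int \<lfloor>s\<rfloor>"
    unfolding D_def s_def by simp
  then have "real D \<le> s" "s < real D + 1"
    by linarith+
  ultimately have D4: "4 \<le> D" and sD: "s - 1 < real D" "real D \<le> s" "100 \<le> s"
    by linarith+
  have "6 * real D \<le> s * s"
    using sD mult_right_mono[of 6 s s] by linarith
  then have n6: "6 * D \<le> n"
    using ss by (simp flip: of_nat_le_iff)
  show "4 \<le> D" "6 * D \<le> n"
    by (fact D4, fact n6)
  have "n - 6 \<le> 2 * ((n - 5) div 2)"
    by linarith
  then have "real (n - 6) \<le> 2 * real ((n - 5) div 2)"
    by (metis of_nat_le_iff of_nat_mult of_nat_numeral)
  then have "(real n - 6) / 2 \<le> real ((n - 5) div 2)"
    using n by (simp add: of_nat_diff)
  moreover have "s - 2 \<le> real (D - 1)"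
    using sD D4 by (simp add: of_nat_diff)
  ultimately have lower: "((real n - 6) / 2) * (s - 2) \<le> real ((n - 5) div 2) * real (D - 1)"
    using sD by (intro mult_mono) auto
  have "real n powr 1.5 / 8 = (real n / 4) * (s / 2)"
    unfolding pw by simp
  also have "\<dots> \<le> ((real n - 6) / 2) * (s - 2)"
    using sD n by (intro mult_mono) auto
  also have "\<dots> \<le> real ((n - 5) div 2 * (D - 1))"
    using lower by simp
  finally show "real n powr 1.5 / 8 \<le> real ((n - 5) div 2 * (D - 1))" .
  have "real D * s / 2 + 6 * real D \<le> s * s"
    using sD mult_right_mono[of "real D" s s] mult_right_mono[of 12 s s] by linarith
  then have "real n * (real D * s / 2 + 6 * real D) \<le> real n * (s * s)"
    by (intro mult_left_mono) auto
  then show "4 * real D * (real n powr 1.5 / 8) \<le> real ((n - 6 * D) * n)"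
    unfolding pw using ss n6 by (simp add: of_nat_diff algebra_simps)
qed

theorem lemma4p1:
  shows "\<exists>c::real. c > 0 \<and> (\<exists>N. \<forall>n\<ge>N. \<exists>x. Hex n x = HStar \<and>
           real (cert_complexity n not0 x) \<ge> c * real n powr 1.5 \<and>
           real (cert_complexity n not1 x) \<ge> c * real n powr 1.5)"
proof (intro exI[of _ "1 / 8"] conjI exI[of _ 10000] allI impI)
  fix n :: nat
  assume n: "10000 \<le> n"
  define D where "D = nat \<lfloor>sqrt (real n)\<rfloor>"
  note bounds = floor_sqrt_bounds[OF n, folded D_def]
  have "9 \<le> n"
    using n by simp
  note lower = cert_complexity_hard_input[OF bounds(1,2) this]
  have "4 * real D * (real n powr 1.5 / 8)
      \<le> 4 * real D * real (cert_complexity n not1 (hard_input n D))"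
    using bounds(4) lower(2) n by (simp flip: of_nat_mult of_nat_le_iff)
  then have "real n powr 1.5 / 8 \<le> real (cert_complexity n not1 (hard_input n D))"
    using bounds(1) by (simp add: mult_le_cancel_left_pos)
  moreover have "real ((n - 5) div 2 * (D - 1)) \<le> real (cert_complexity n not0 (hard_input n D))"
    using lower(1) by (simp only: of_nat_le_iff)
  then have "real n powr 1.5 / 8 \<le> real (cert_complexity n not0 (hard_input n D))"
    using bounds(3) by linarith
  moreover have "Hex n (hard_input n D) = HStar"
    using Hex_hard_input bounds(1,2) n by simp
  ultimately show "\<exists>x. Hex n x = HStar \<and>
      real (cert_complexity n not0 x) \<ge> 1 / 8 * real n powr 1.5 \<and>
      real (cert_complexity n not1 x) \<ge> 1 / 8 * real n powr 1.5"
    by auto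
qed simp

end
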